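(* Let $K\subset\mathbb{R}^2$ be a convex set such that every closed planar curve of length $1$ can be moved by an isometry of the plane so that it lies inside $K$. Then the area of $K$ is at least $0.0879873$.
   Context: Such a set $K$ is called a convex universal cover for unit closed curves. *)

theory Defs
  imports "HOL-Analysis.Analysis"
begin

definition polygonal_lengths :: "(real \<Rightarrow> 'a::metric_space) \<Rightarrow> real set" where
  "polygonal_lengths g =
     {(\<Sum>i<n. dist (g (t i)) (g (t (Suc i)))) | t n.
        t 0 = 0 \<and> t n = 1 \<and> (\<forall>i<n. t i \<le> t (Suc i))}"

definition rectifiable_path :: "(real \<Rightarrow> 'a::metric_space) \<Rightarrow> bool" where
  "rectifiable_path g \<longleftrightarrow> path g \<and> bdd_above (polygonal_lengths g)"

definition curve_length :: "(real \<Rightarrow> 'a::metric_space) \<Rightarrow> real" where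
  "curve_length g = Sup (polygonal_lengths g)"

text \<open>Isometry of a metric space onto itself (distance preserving; in the
  Euclidean plane such maps are automatically surjective).\<close>
definition isometry :: "('a::metric_space \<Rightarrow> 'a) \<Rightarrow> bool" where
  "isometry f \<longleftrightarrow> (\<forall>x y. dist (f x) (f y) = dist x y)"

end

theory Submission
  imports Defs
begin

text \<open>The circle of circumference 1 and a segment of length 1/2 traversed there and back are
  closed curves of length 1. So \<open>K\<close> contains a circle of radius \<open>\<rho> = 1/(2\<pi>)\<close> about some
  point \<open>c\<close>, hence by convexity its disc of area \<open>1/(4\<pi>)\<close>, and two points \<open>p\<close>, \<open>q\<close> with
  \<open>|p - q| = 1/2\<close>. For a point \<open>p\<close> of \<open>K\<close> outside the disc, convexity also puts into \<open>K\<close> a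
  triangle with apex \<open>p\<close> lying beyond the tangent to the circle facing \<open>p\<close>, whose area grows
  with \<open>|p - c|\<close>. Either one of \<open>p\<close>, \<open>q\<close> is at distance at least 0.27 from \<open>c\<close> and its
  triangle alone suffices, or both distances lie in \<open>[0.23, 0.27)\<close>; then the angle \<open>pcq\<close> is
  obtuse and the two triangles are disjoint. Either way the disc and the triangles have total
  area at least 0.0879873.\<close>

section \<open>Length of Lipschitz curves\<close>

lemma polygonal_lengths_le_lipschitz:
  fixes g :: "real \<Rightarrow> 'a::metric_space"
  assumes "L-lipschitz_on UNIV g" and "x \<in> polygonal_lengths g"
  shows "x \<le> L"
proof -
  obtain t n where x: "x = (\<Sum>i<n. dist (g (t i)) (g (t (Suc i))))"
    and t: "t 0 = 0" "t n = 1" "\<forall>i<n. t i \<le> t (Suc i)"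
    using assms(2) unfolding polygonal_lengths_def by blast
  have "x \<le> (\<Sum>i<n. L * (t (Suc i) - t i))"
    unfolding x
  proof (intro sum_mono)
    fix i assume "i \<in> {..<n}"
    then show "dist (g (t i)) (g (t (Suc i))) \<le> L * (t (Suc i) - t i)"
      using t(3) lipschitz_onD[OF assms(1), of "t i" "t (Suc i)"] by (simp add: dist_real_def)
  qed
  also have "\<dots> = L * (t n - t 0)"
    by (simp add: sum_distrib_left[symmetric] sum_lessThan_telescope)
  finally show ?thesis using t by simp
qed

lemma rectifiable_path_lipschitz:
  fixes g :: "real \<Rightarrow> 'a::metric_space"
  assumes "L-lipschitz_on UNIV g"
  shows "rectifiable_path g"
  unfolding rectifiable_path_def path_def
  using polygonal_lengths_le_lipschitz[OF assms] lipschitz_on_continuous_on[OF assms]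
  by (auto intro!: bdd_aboveI[of _ L] intro: continuous_on_subset)

lemma curve_length_eq_lipschitz:
  fixes g :: "real \<Rightarrow> 'a::metric_space"
  assumes "L-lipschitz_on UNIV g" and "X \<longlonglongrightarrow> L"
    and "\<forall>\<^sub>F n in sequentially. X n \<in> polygonal_lengths g"
  shows "curve_length g = L"
proof -
  have "polygonal_lengths g \<noteq> {}"
    using eventually_happens[OF assms(3)] by auto
  then have "curve_length g \<le> L"
    unfolding curve_length_def using polygonal_lengths_le_lipschitz[OF assms(1)]
    by (intro cSup_least) auto
  moreover have "L \<le> curve_length g"
    unfolding curve_length_def
    using polygonal_lengths_le_lipschitz[OF assms(1)] assms(3)
    by (intro tendsto_upperbound[OF assms(2)]) (auto elim!: eventually_mono intro!: cSup_upper bdd_aboveI[of _ L])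
  ultimately show ?thesis by simp
qed

section \<open>Two closed curves of length one\<close>

lemma dist_linepath: "dist (linepath a b s) (linepath a b t) = \<bar>s - t\<bar> * dist a b"
proof -
  have "linepath a b s - linepath a b t = (s - t) *\<^sub>R (b - a)"
    by (simp add: linepath_def algebra_simps)
  then show ?thesis by (simp add: dist_norm norm_minus_commute)
qed

definition back_and_forth :: "'a::real_normed_vector \<Rightarrow> 'a \<Rightarrow> real \<Rightarrow> 'a" where
  "back_and_forth a b t = linepath a b (1 - \<bar>2 * t - 1\<bar>)"

lemma lipschitz_back_and_forth: "(2 * dist a b)-lipschitz_on UNIV (back_and_forth a b)"
proof (rule lipschitz_onI)
  fix s t :: real
  have "\<bar>(1 - \<bar>2 * s - 1\<bar>) - (1 - \<bar>2 * t - 1\<bar>)\<bar> = \<bar>\<bar>2 * t - 1\<bar> - \<bar>2 * s - 1\<bar>\<bar>"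
    by simp
  also have "\<dots> \<le> \<bar>(2 * t - 1) - (2 * s - 1)\<bar>" by (rule abs_triangle_ineq3)
  also have "\<dots> = 2 * \<bar>s - t\<bar>" by (simp add: abs_if)
  finally have "\<bar>(1 - \<bar>2 * s - 1\<bar>) - (1 - \<bar>2 * t - 1\<bar>)\<bar> \<le> 2 * \<bar>s - t\<bar>" .
  from mult_right_mono[OF this zero_le_dist[of a b]]
  show "dist (back_and_forth a b s) (back_and_forth a b t) \<le> 2 * dist a b * dist s t"
    unfolding back_and_forth_def dist_linepath dist_real_def by (simp add: mult_ac)
qed simp

lemma back_and_forth_closed: "pathfinish (back_and_forth a b) = pathstart (back_and_forth a b)"
  by (simp add: pathfinish_def pathstart_def back_and_forth_def)

lemma curve_length_back_and_forth: "curve_length (back_and_forth a b) = 2 * dist a b"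
proof (rule curve_length_eq_lipschitz[OF lipschitz_back_and_forth tendsto_const always_eventually])
  have "(\<Sum>i<2. dist (back_and_forth a b (real i / 2)) (back_and_forth a b (real (Suc i) / 2)))
      = 2 * dist a b"
    by (simp add: numeral_2_eq_2 back_and_forth_def linepath_0' linepath_1' dist_commute)
  then show "\<forall>n. 2 * dist a b \<in> polygonal_lengths (back_and_forth a b)"
    unfolding polygonal_lengths_def
    by (intro allI CollectI exI[of _ "\<lambda>i. real i / 2"] exI[of _ 2]) auto
qed

lemma norm_real_2: "norm (x :: real^2) = sqrt ((x$1)\<^sup>2 + (x$2)\<^sup>2)"
  by (simp add: norm_eq_sqrt_inner inner_vec_def sum_2 power2_eq_square)

definition circle_path :: "real^2 \<Rightarrow> real \<Rightarrow> real \<Rightarrow> real^2" where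
  "circle_path c r t = c + r *\<^sub>R vector [cos (2 * pi * t), sin (2 * pi * t)]"

lemma dist_circle_path:
  assumes "0 \<le> r"
  shows "dist (circle_path c r s) (circle_path c r t) = 2 * r * \<bar>sin (pi * (s - t))\<bar>"
proof -
  have chord: "(cos a - cos b)\<^sup>2 + (sin a - sin b)\<^sup>2 = (2 * sin ((a - b) / 2))\<^sup>2" for a b :: real
  proof -
    have "(cos a - cos b)\<^sup>2 + (sin a - sin b)\<^sup>2 = 2 - 2 * cos (a - b)"
      by (simp add: cos_diff power2_eq_square algebra_simps)
    also have "\<dots> = 4 * (sin ((a - b) / 2))\<^sup>2"
      using cos_double_sin[of "(a - b) / 2", unfolded mult_2 field_sum_of_halves] by linarith
    finally show ?thesis by (simp add: power_mult_distrib)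
  qed
  have "vector [x1, y1] - vector [x2, y2] = (vector [x1 - x2, y1 - y2] :: real^2)" for x1 y1 x2 y2
    by (simp add: vec_eq_iff forall_2)
  then have "dist (circle_path c r s) (circle_path c r t)
      = r * norm (vector [cos (2 * pi * s) - cos (2 * pi * t), sin (2 * pi * s) - sin (2 * pi * t)] :: real^2)"
    using assms by (simp add: circle_path_def dist_norm flip: scaleR_diff_right)
  also have "\<dots> = r * \<bar>2 * sin ((2 * pi * s - 2 * pi * t) / 2)\<bar>"
    by (simp only: norm_real_2 vector_2 chord real_sqrt_abs)
  also have "(2 * pi * s - 2 * pi * t) / 2 = pi * (s - t)" by (simp add: field_simps)
  finally show ?thesis by (simp add: abs_mult)
qed

lemma lipschitz_circle_path:
  assumes "0 \<le> r"
  shows "(2 * pi * r)-lipschitz_on UNIV (circle_path c r)"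
proof (rule lipschitz_onI)
  fix s t :: real
  have "2 * r * \<bar>sin (pi * (s - t))\<bar> \<le> 2 * r * \<bar>pi * (s - t)\<bar>"
    using assms abs_sin_x_le_abs_x by (intro mult_left_mono) auto
  then show "dist (circle_path c r s) (circle_path c r t) \<le> 2 * pi * r * dist s t"
    using assms by (simp add: dist_circle_path dist_real_def abs_mult mult_ac)
qed (use assms in simp)

lemma circle_path_closed: "pathfinish (circle_path c r) = pathstart (circle_path c r)"
  by (simp add: pathfinish_def pathstart_def circle_path_def)

lemma regular_polygon_perimeter_tendsto:
  "(\<lambda>n. 2 * real n * r * sin (pi / real n)) \<longlonglongrightarrow> 2 * pi * r"
proof -
  have "((\<lambda>y. sin y / y) \<longlongrightarrow> 1) (at (0::real))"
    using DERIV_sin[of 0] unfolding has_field_derivative_iff by simp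
  moreover have "filterlim (\<lambda>n. pi / real n) (at 0) sequentially"
    unfolding filterlim_at
    using eventually_gt_at_top[of "0::nat"] lim_const_over_n[of pi]
    by (auto elim: eventually_mono)
  ultimately have "(\<lambda>n. sin (pi / real n) / (pi / real n)) \<longlonglongrightarrow> 1"
    by (rule filterlim_compose[unfolded o_def])
  then have "(\<lambda>n. 2 * pi * r * (sin (pi / real n) / (pi / real n))) \<longlonglongrightarrow> 2 * pi * r"
    by (rule tendsto_mult_left[of _ 1 _ "2 * pi * r", unfolded mult_1_right])
  moreover have "\<forall>\<^sub>F n in sequentially.
      2 * pi * r * (sin (pi / real n) / (pi / real n)) = 2 * real n * r * sin (pi / real n)"
    using eventually_gt_at_top[of "0::nat"] by (auto elim!: eventually_mono)
  ultimately show ?thesis by (rule Lim_transform_eventually)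
qed

lemma curve_length_circle_path:
  assumes "0 \<le> r"
  shows "curve_length (circle_path c r) = 2 * pi * r"
proof (rule curve_length_eq_lipschitz[OF lipschitz_circle_path[OF assms] regular_polygon_perimeter_tendsto])
  have "2 * real n * r * sin (pi / real n) \<in> polygonal_lengths (circle_path c r)" if "n > 0" for n
  proof -
    have "dist (circle_path c r (real i / real n)) (circle_path c r (real (Suc i) / real n))
        = 2 * r * sin (pi / real n)" for i
    proof -
      have "pi * (real i / real n - real (Suc i) / real n) = - (pi / real n)"
        using that by (simp add: field_simps)
      moreover have "0 \<le> sin (pi / real n)"
        using that by (intro sin_ge_zero) (auto simp: field_simps)
      ultimately show ?thesis using assms by (simp add: dist_circle_path)
    qed
    then have "(\<Sum>i<n. dist (circle_path c r (real i / real n)) (circle_path c r (real (Suc i) / real n)))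
        = 2 * real n * r * sin (pi / real n)"
      by simp
    then show ?thesis
      unfolding polygonal_lengths_def using that
      by (intro CollectI exI[of _ "\<lambda>i. real i / real n"] exI[of _ n]) (auto simp: divide_right_mono)
  qed
  then show "\<forall>\<^sub>F n in sequentially. 2 * real n * r * sin (pi / real n) \<in> polygonal_lengths (circle_path c r)"
    by (simp add: eventually_mono[OF eventually_gt_at_top[of "0::nat"]])
qed

lemma sphere_subset_path_image_circle_path:
  assumes "0 < r"
  shows "sphere c r \<subseteq> path_image (circle_path c r)"
proof
  fix y assume "y \<in> sphere c r"
  then have "norm (y - c) = r"
    by (simp add: dist_norm norm_minus_commute)
  then have "sqrt (((y - c)$1)\<^sup>2 + ((y - c)$2)\<^sup>2) = r"
    by (simp only: norm_real_2)
  then have "((y - c)$1)\<^sup>2 + ((y - c)$2)\<^sup>2 = r\<^sup>2"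
    by (metis add_nonneg_nonneg real_sqrt_pow2 zero_le_power2)
  then have "((y - c)$1 / r)\<^sup>2 + ((y - c)$2 / r)\<^sup>2 = 1"
    using assms by (simp add: power_divide add_divide_distrib[symmetric])
  then obtain \<theta> where \<theta>: "0 \<le> \<theta>" "\<theta> < 2 * pi" "(y - c)$1 / r = cos \<theta>" "(y - c)$2 / r = sin \<theta>"
    by (rule sincos_total_2pi)
  then have "y = circle_path c r (\<theta> / (2 * pi))"
    using assms by (simp add: circle_path_def vec_eq_iff forall_2 field_simps)
  moreover have "\<theta> / (2 * pi) \<in> {0..1}" using \<theta> by auto
  ultimately show "y \<in> path_image (circle_path c r)" unfolding path_image_def by blast
qed

section \<open>Isometries and convex sets\<close>

lemma isometry_sphere_subset_image:
  fixes f :: "'a::euclidean_space \<Rightarrow> 'a"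
  assumes "isometry f"
  shows "sphere (f a) r \<subseteq> f ` sphere a r"
proof
  fix z assume z: "z \<in> sphere (f a) r"
  define L where "L x = f (a + x) - f a" for x
  have "L 0 = 0" "dist (L x) (L y) = dist (f (a + x)) (f (a + y))" for x y
    by (simp_all add: L_def dist_norm)
  then have "orthogonal_transformation L"
    using assms unfolding orthogonal_transformation_isometry isometry_def by simp
  then have "surj L" and norm_L: "norm (L x) = norm x" for x
    by (simp_all add: orthogonal_transformation_surj orthogonal_transformation_norm)
  then obtain y where y: "L y = z - f a" by (metis surjD)
  then have "a + y \<in> sphere a r"
    using z norm_L[of y] by (simp add: dist_norm norm_minus_commute)
  moreover have "f (a + y) = z" using y by (simp add: L_def)
  ultimately show "z \<in> f ` sphere a r" by force
qed

lemma convex_sphere_subset_imp_cball_subset: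
  fixes c :: "'a::euclidean_space"
  assumes "convex K" and "sphere c r \<subseteq> K"
  shows "cball c r \<subseteq> K"
proof -
  have "cball c r = convex hull (sphere c r)"
    using Krein_Milman_frontier[of "cball c r"] by simp
  then show ?thesis using assms by (metis hull_minimal)
qed

lemma lebesgue_measurable_convex:
  fixes K :: "'a::euclidean_space set"
  assumes "convex K"
  shows "K \<in> sets lebesgue"
proof -
  have "K = (\<Union>n. K \<inter> ball 0 (real n))"
    by (auto simp: dist_norm) (meson reals_Archimedean2)
  moreover have "K \<inter> ball 0 (real n) \<in> sets lebesgue" for n
    using measurable_convex[of "K \<inter> ball 0 (real n)"] assms by (auto intro: convex_Int)
  then have "(\<Union>n. K \<inter> ball 0 (real n)) \<in> sets lebesgue"
    by (intro sets.countable_UN) auto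
  ultimately show ?thesis by simp
qed

section \<open>Cap triangles\<close>

definition rot90 :: "real^2 \<Rightarrow> real^2" where
  "rot90 u = vector [- u$2, u$1]"

lemma inner_rot90_self [simp]: "u \<bullet> rot90 u = 0"
  by (simp add: rot90_def inner_vec_def sum_2)

lemma norm_scaleR_add_rot90: "norm (a *\<^sub>R u + b *\<^sub>R rot90 u) = sqrt (a\<^sup>2 + b\<^sup>2) * norm u"
  unfolding norm_real_2 real_sqrt_mult[symmetric]
  by (simp add: rot90_def power2_eq_square algebra_simps)

lemma norm_rot90 [simp]: "norm (rot90 u) = norm u"
  using norm_scaleR_add_rot90[of 0 u 1] by simp

text \<open>The apex is \<open>c + d u\<close>; the base lies on the tangent at \<open>c + r u\<close>, its endpoints being
  where the segments from the apex to the circle points \<open>c + r (3 u \<plusminus> 4 v)/5\<close>, \<open>v = rot90 u\<close>,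
  cross the tangent. Hence any convex set containing the circle and the apex contains the
  triangle, whose area is \<open>s (d - r)\<close>.\<close>
definition cap_triangle :: "real^2 \<Rightarrow> real \<Rightarrow> real \<Rightarrow> real^2 \<Rightarrow> (real^2) set" where
  "cap_triangle c r d u =
     (let s = 0.8 * r * (d - r) / (d - 0.6 * r)
      in convex hull {c + d *\<^sub>R u, c + r *\<^sub>R u + s *\<^sub>R rot90 u, c + r *\<^sub>R u - s *\<^sub>R rot90 u})"

lemma cap_triangle_subset:
  assumes "convex K" "sphere c r \<subseteq> K" "c + d *\<^sub>R u \<in> K"
    and "norm u = 1" "0 < r" "r < d"
  shows "cap_triangle c r d u \<subseteq> K"
proof -
  define l where "l = (d - r) / (d - 0.6 * r)"
  define s where "s = 0.8 * r * (d - r) / (d - 0.6 * r)"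
  have l: "0 < l" "l < 1" using assms by (auto simp: l_def field_simps)
  have "l * (d - 0.6 * r) = d - r" using assms by (simp add: l_def)
  then have weights: "(1 - l) * d + l * (0.6 * r) = r" by (simp add: algebra_simps)
  have "l * (0.8 * r) = s" by (simp add: l_def s_def mult_ac)
  have base_in_K: "c + r *\<^sub>R u + (\<sigma> * s) *\<^sub>R rot90 u \<in> K" if "\<sigma>\<^sup>2 = 1" for \<sigma>
  proof -
    define t where "t = c + r *\<^sub>R (0.6 *\<^sub>R u + (\<sigma> * 0.8) *\<^sub>R rot90 u)"
    have "norm (0.6 *\<^sub>R u + (\<sigma> * 0.8) *\<^sub>R rot90 u) = 1"
      using that assms(4) by (simp add: norm_scaleR_add_rot90 power_mult_distrib power_divide)
    then have "t \<in> K" using assms(2,5) by (auto simp: t_def dist_norm)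
    then have "(1 - l) *\<^sub>R (c + d *\<^sub>R u) + l *\<^sub>R t \<in> K"
      using convexD[OF assms(1) assms(3)] l by simp
    moreover have "(1 - l) *\<^sub>R (c + d *\<^sub>R u) + l *\<^sub>R t = c + r *\<^sub>R u + (\<sigma> * s) *\<^sub>R rot90 u"
      unfolding t_def \<open>l * (0.8 * r) = s\<close>[symmetric] using weights
      by (simp add: algebra_simps flip: scaleR_add_left)
    ultimately show ?thesis by simp
  qed
  show ?thesis
    unfolding cap_triangle_def Let_def s_def[symmetric]
    using base_in_K[of 1] base_in_K[of "-1"] assms(1,3) by (intro hull_minimal) auto
qed

lemma cap_triangle_lmeasurable: "cap_triangle c r d u \<in> lmeasurable"
  unfolding cap_triangle_def Let_def
  by (intro measurable_convex convex_convex_hull finite_imp_bounded_convex_hull) auto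

lemma measure_cap_triangle:
  assumes "norm u = 1" "0 < r" "r < d"
  shows "measure lebesgue (cap_triangle c r d u) = 0.8 * r * (d - r)\<^sup>2 / (d - 0.6 * r)"
proof -
  define s where "s = 0.8 * r * (d - r) / (d - 0.6 * r)"
  define p a1 a2 where "p = c + d *\<^sub>R u"
    and "a1 = c + r *\<^sub>R u + s *\<^sub>R rot90 u" and "a2 = c + r *\<^sub>R u - s *\<^sub>R rot90 u"
  have T: "cap_triangle c r d u = convex hull {p, a1, a2}"
    by (simp add: cap_triangle_def Let_def s_def p_def a1_def a2_def)
  have "0 \<le> s" using assms(2,3) by (simp add: s_def)
  have u: "(u$1)\<^sup>2 + (u$2)\<^sup>2 = 1" using assms(1) by (simp add: norm_real_2)
  have "measure lebesgue (convex hull {p, a1, a2}) = measure lborel (convex hull {p, a1, a2})"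
    by (intro measure_completion) (auto intro!: borel_compact finite_imp_compact_convex_hull)
  also have "\<dots> = \<bar>(a2$1 - p$1) * (a1$2 - p$2) - (a1$1 - p$1) * (a2$2 - p$2)\<bar> / 2"
    by (rule content_triangle)
  also have "(a2$1 - p$1) * (a1$2 - p$2) - (a1$1 - p$1) * (a2$2 - p$2)
      = 2 * s * (r - d) * ((u$1)\<^sup>2 + (u$2)\<^sup>2)"
    by (simp add: p_def a1_def a2_def rot90_def algebra_simps power2_eq_square)
  also have "\<bar>2 * s * (r - d) * ((u$1)\<^sup>2 + (u$2)\<^sup>2)\<bar> / 2 = s * (d - r)"
    using assms(3) \<open>0 \<le> s\<close> by (simp add: u abs_mult)
  also have "s * (d - r) = 0.8 * r * (d - r)\<^sup>2 / (d - 0.6 * r)"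
    by (simp only: s_def power2_eq_square times_divide_eq_left mult.assoc)
  finally show ?thesis unfolding T .
qed

lemma cap_triangle_beyond_tangent:
  assumes "norm u = 1" "r \<le> d" "x \<in> cap_triangle c r d u"
  shows "r \<le> (x - c) \<bullet> u"
proof -
  have "cap_triangle c r d u \<subseteq> {x. r + u \<bullet> c \<le> u \<bullet> x}"
    unfolding cap_triangle_def Let_def
    using assms(1,2) by (intro hull_minimal convex_halfspace_ge)
      (auto simp: inner_add_right inner_diff_right inner_commute[of u "rot90 u"] dot_square_norm)
  then show ?thesis using assms(3) by (auto simp: inner_commute[of _ u] inner_diff_right)
qed

lemma cap_triangle_disjoint_ball:
  assumes "norm u = 1" "r \<le> d"
  shows "cap_triangle c r d u \<inter> ball c r = {}"
proof -
  have "(x - c) \<bullet> u < r" if "x \<in> ball c r" for x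
    using norm_cauchy_schwarz[of "x - c" u] that assms(1)
    by (simp add: dist_norm norm_minus_commute)
  then show ?thesis using cap_triangle_beyond_tangent[OF assms] by fastforce
qed

lemma cap_triangle_wedge:
  assumes "norm u = 1" "norm w \<le> 1" "w \<bullet> u < 0" "0 < r" "r < d" "x \<in> cap_triangle c r d u"
  shows "(x - c) \<bullet> w < (x - c) \<bullet> u"
proof -
  define s where "s = 0.8 * r * (d - r) / (d - 0.6 * r)"
  have "0.8 * r * (d - r) < r * (d - 0.6 * r)"
    using assms(4,5) mult_strict_left_mono[of "0.8 * (d - r)" "d - 0.6 * r" r] by (simp add: mult_ac)
  then have s: "0 \<le> s" "s < r" using assms(4,5) by (simp_all add: s_def pos_divide_less_eq)
  have vertex: "(w - u) \<bullet> (c + a *\<^sub>R u + b *\<^sub>R rot90 u) < (w - u) \<bullet> c"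
    if "0 < a" "\<bar>b\<bar> \<le> a" for a b
  proof -
    have "\<bar>rot90 u \<bullet> w\<bar> \<le> 1"
      using Cauchy_Schwarz_ineq2[of "rot90 u" w] assms(1,2) by simp
    from mult_mono[OF that(2) this] have "\<bar>b * (rot90 u \<bullet> w)\<bar> \<le> a"
      using that(1) by (simp add: abs_mult)
    then have "b * (rot90 u \<bullet> w) \<le> a" by (simp add: abs_le_iff)
    moreover have "a * (u \<bullet> w) < 0" using that assms(3) by (simp add: inner_commute mult_pos_neg)
    ultimately have "(a *\<^sub>R u + b *\<^sub>R rot90 u) \<bullet> (w - u) < 0"
      using assms(1) by (simp add: inner_diff_right inner_add_left dot_square_norm inner_commute[of "rot90 u"])
    moreover have "(w - u) \<bullet> (c + a *\<^sub>R u + b *\<^sub>R rot90 u)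
        = (w - u) \<bullet> c + (a *\<^sub>R u + b *\<^sub>R rot90 u) \<bullet> (w - u)"
      unfolding add.assoc inner_add_right[of "w - u" c] inner_commute[of "w - u" "a *\<^sub>R u + b *\<^sub>R rot90 u"] ..
    ultimately show ?thesis by linarith
  qed
  have "cap_triangle c r d u \<subseteq> {x. (w - u) \<bullet> x < (w - u) \<bullet> c}"
    unfolding cap_triangle_def Let_def s_def[symmetric]
  proof (intro hull_minimal convex_halfspace_lt)
    show "{c + d *\<^sub>R u, c + r *\<^sub>R u + s *\<^sub>R rot90 u, c + r *\<^sub>R u - s *\<^sub>R rot90 u}
        \<subseteq> {x. (w - u) \<bullet> x < (w - u) \<bullet> c}"
      using vertex[of d 0] vertex[of r s] vertex[of r "- s"] assms(4,5) s
      by auto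
  qed
  then show ?thesis using assms(6) by (auto simp: inner_diff_left inner_diff_right inner_commute)
qed

lemma cap_triangles_disjoint:
  assumes "norm u1 = 1" "norm u2 = 1" "u1 \<bullet> u2 < 0" "0 < r" "r < d1" "r < d2"
  shows "cap_triangle c r d1 u1 \<inter> cap_triangle c r d2 u2 = {}"
  using cap_triangle_wedge[of u1 u2 r d1 _ c] cap_triangle_wedge[of u2 u1 r d2 _ c] assms
  by (force simp: inner_commute)

section \<open>Area bounds\<close>

text \<open>With \<open>x = d - r\<close> the area is \<open>0.8 x / (1/r + 0.4/x)\<close>, increasing in both \<open>r\<close> and \<open>x\<close>.\<close>
lemma cap_area_mono:
  fixes r0 r x0 d :: real
  assumes "0 < r0" "r0 \<le> r" "0 < x0" "x0 \<le> d - r"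
  shows "0.8 * r0 * x0\<^sup>2 / (x0 + 0.4 * r0) \<le> 0.8 * r * (d - r)\<^sup>2 / (d - 0.6 * r)"
proof -
  have eq: "0.8 * r * x\<^sup>2 / (x + 0.4 * r) = 0.8 * x / (1 / r + 0.4 / x)" if "0 < r" "0 < x" for r x :: real
    using that by (simp add: field_simps power2_eq_square)
  have "0.8 * x0 / (1 / r0 + 0.4 / x0) \<le> 0.8 * (d - r) / (1 / r + 0.4 / (d - r))"
    using assms by (intro frac_le add_mono divide_left_mono) (auto intro: add_pos_pos)
  moreover have "d - 0.6 * r = (d - r) + 0.4 * r" by simp
  ultimately show ?thesis
    using assms eq[of r0 x0] eq[of r "d - r"] by simp
qed

lemma measure_cap_triangle_ge:
  assumes "norm u = 1" "0 < r0" "r0 \<le> r" "0 < x0" "x0 \<le> d - r"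
  shows "0.8 * r0 * x0\<^sup>2 / (x0 + 0.4 * r0) \<le> measure lebesgue (cap_triangle c r d u)"
proof -
  have "0 < r" "r < d" using assms(2-5) by linarith+
  then show ?thesis using cap_area_mono[OF assms(2-5)] by (simp only: measure_cap_triangle[OF assms(1)])
qed

lemma inverse_two_pi_bounds:
  "0.15915 \<le> 1 / (2 * pi)" "1 / (2 * pi) \<le> 0.15916" "0.0795 \<le> (1 / (2 * pi))\<^sup>2 * pi"
  using pi_approx by (auto simp: field_simps power2_eq_square)

lemma measure_Un_disjoint:
  assumes "A \<in> fmeasurable M" "B \<in> fmeasurable M" "A \<inter> B = {}"
  shows "measure M (A \<union> B) = measure M A + measure M B"
  using measure_Un2[OF assms(1,2)] assms(3) by (simp add: Diff_triv Int_commute)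

lemma ennreal_le_emeasure_convex:
  fixes K :: "'a::euclidean_space set"
  assumes "convex K" "S \<subseteq> K" "S \<in> lmeasurable" "a \<le> measure lebesgue S"
  shows "ennreal a \<le> emeasure lebesgue K"
proof -
  have "ennreal a \<le> emeasure lebesgue S"
    using assms(3,4) by (simp add: emeasure_eq_measure2 ennreal_leI)
  also have "\<dots> \<le> emeasure lebesgue K"
    using assms(2) lebesgue_measurable_convex[OF assms(1)] by (intro emeasure_mono)
  finally show ?thesis .
qed

lemma add_norm_scaleR_sgn_diff: "c + norm (p - c) *\<^sub>R sgn (p - c) = (p :: 'a::real_normed_vector)"
  by (cases "p = c") (simp_all add: sgn_div_norm)

lemma convex_contains_cap_triangle:
  assumes "convex K" "sphere c r \<subseteq> K" "p \<in> K" "0 < r" "r < dist p c"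
  shows "cap_triangle c r (dist p c) (sgn (p - c)) \<subseteq> K"
proof -
  have "p \<noteq> c" using assms(4,5) by auto
  then show ?thesis
    using cap_triangle_subset[of K c r "dist p c" "sgn (p - c)"] assms
    by (simp add: dist_norm norm_sgn add_norm_scaleR_sgn_diff)
qed

lemma emeasure_ge_disc_and_far_point:
  fixes K :: "(real^2) set"
  assumes "convex K" "sphere c (1 / (2 * pi)) \<subseteq> K" "p \<in> K" "0.27 \<le> dist p c"
  shows "ennreal 0.0879873 \<le> emeasure lebesgue K"
proof -
  define \<rho> where "\<rho> = 1 / (2 * pi)"
  define T where "T = cap_triangle c \<rho> (dist p c) (sgn (p - c))"
  have \<rho>: "0.15915 \<le> \<rho>" "\<rho> \<le> 0.15916" "0.0795 \<le> \<rho>\<^sup>2 * pi"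
    unfolding \<rho>_def by (fact inverse_two_pi_bounds)+
  have u: "norm (sgn (p - c)) = 1" using assms(4) by (auto simp: norm_sgn)
  have "0.0089 \<le> 0.8 * 0.15915 * (0.27 - 0.15916)\<^sup>2 / ((0.27 - 0.15916) + 0.4 * (0.15915::real))"
    by (simp add: power2_eq_square)
  also have "\<dots> \<le> measure lebesgue T"
    unfolding T_def using \<rho> assms(4) by (intro measure_cap_triangle_ge u) auto
  finally have "0.0089 \<le> measure lebesgue T" .
  moreover have "ball c \<rho> \<inter> T = {}"
    using cap_triangle_disjoint_ball[OF u, of \<rho> "dist p c" c] \<rho> assms(4) by (auto simp: T_def)
  then have "measure lebesgue (ball c \<rho> \<union> T) = \<rho>\<^sup>2 * pi + measure lebesgue T"
    using \<rho> circle_area[of \<rho> c] by (simp add: measure_Un_disjoint T_def cap_triangle_lmeasurable)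
  ultimately have "0.0879873 \<le> measure lebesgue (ball c \<rho> \<union> T)"
    using \<rho> by simp
  moreover have "ball c \<rho> \<union> T \<subseteq> K"
    using convex_sphere_subset_imp_cball_subset[OF assms(1,2)]
      convex_contains_cap_triangle[OF assms(1,2,3)] \<rho> assms(4)
    by (auto simp: T_def \<rho>_def)
  ultimately show ?thesis
    using assms(1) by (intro ennreal_le_emeasure_convex) (auto simp: T_def cap_triangle_lmeasurable)
qed

lemma emeasure_ge_disc_and_opposite_points:
  fixes K :: "(real^2) set"
  assumes "convex K" "sphere c (1 / (2 * pi)) \<subseteq> K" "p \<in> K" "q \<in> K"
    and "0.23 \<le> dist p c" "0.23 \<le> dist q c" "(p - c) \<bullet> (q - c) < 0"
  shows "ennreal 0.0879873 \<le> emeasure lebesgue K"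
proof -
  define \<rho> where "\<rho> = 1 / (2 * pi)"
  define T where "T x = cap_triangle c \<rho> (dist x c) (sgn (x - c))" for x
  have \<rho>: "0.15915 \<le> \<rho>" "\<rho> \<le> 0.15916" "0.0795 \<le> \<rho>\<^sup>2 * pi"
    unfolding \<rho>_def by (fact inverse_two_pi_bounds)+
  have u: "norm (sgn (p - c)) = 1" "norm (sgn (q - c)) = 1" using assms(5,6) by (auto simp: norm_sgn)
  have cap_ge: "0.00445 \<le> measure lebesgue (T x)" if "norm (sgn (x - c)) = 1" "0.23 \<le> dist x c" for x
  proof -
    have "0.00445 \<le> 0.8 * 0.15915 * (0.23 - 0.15916)\<^sup>2 / ((0.23 - 0.15916) + 0.4 * (0.15915::real))"
      by (simp add: power2_eq_square)
    also have "\<dots> \<le> measure lebesgue (T x)"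
      unfolding T_def using \<rho> that(2) by (intro measure_cap_triangle_ge that(1)) auto
    finally show ?thesis .
  qed
  have "ball c \<rho> \<inter> T p = {}" "ball c \<rho> \<inter> T q = {}"
    using cap_triangle_disjoint_ball[OF u(1), of \<rho> "dist p c" c]
      cap_triangle_disjoint_ball[OF u(2), of \<rho> "dist q c" c] \<rho> assms(5,6)
    by (auto simp: T_def)
  moreover have "T p \<inter> T q = {}"
    unfolding T_def using \<rho> assms(5-7)
    by (intro cap_triangles_disjoint u) (auto simp: sgn_div_norm dist_norm intro!: mult_pos_neg)
  ultimately have "measure lebesgue (ball c \<rho> \<union> T p \<union> T q)
      = \<rho>\<^sup>2 * pi + measure lebesgue (T p) + measure lebesgue (T q)"
    using \<rho> circle_area[of \<rho> c]
    by (simp add: measure_Un_disjoint fmeasurable.Un T_def cap_triangle_lmeasurable Int_Un_distrib2)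
  then have "0.0879873 \<le> measure lebesgue (ball c \<rho> \<union> T p \<union> T q)"
    using \<rho> cap_ge[OF u(1) assms(5)] cap_ge[OF u(2) assms(6)] by simp
  moreover have "ball c \<rho> \<union> T p \<union> T q \<subseteq> K"
    using convex_sphere_subset_imp_cball_subset[OF assms(1,2)]
      convex_contains_cap_triangle[OF assms(1,2,3)] convex_contains_cap_triangle[OF assms(1,2,4)]
      \<rho> assms(5,6)
    by (auto simp: T_def \<rho>_def)
  ultimately show ?thesis
    using assms(1) by (intro ennreal_le_emeasure_convex) (auto simp: T_def cap_triangle_lmeasurable fmeasurable.Un)
qed

lemma emeasure_ge_disc_and_half_segment:
  fixes K :: "(real^2) set"
  assumes "convex K" "sphere c (1 / (2 * pi)) \<subseteq> K" "p \<in> K" "q \<in> K" "dist p q = 1 / 2"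
  shows "ennreal 0.0879873 \<le> emeasure lebesgue K"
proof (cases "0.27 \<le> dist p c \<or> 0.27 \<le> dist q c")
  case True
  then show ?thesis using emeasure_ge_disc_and_far_point assms(1-4) by blast
next
  case False
  have "1 / 2 \<le> dist p c + dist q c" using dist_triangle2[of p q c] assms(5) by simp
  then have far: "0.23 \<le> dist p c" "0.23 \<le> dist q c" using False by auto
  have "(dist p q)\<^sup>2 = (dist p c)\<^sup>2 + (dist q c)\<^sup>2 - 2 * ((p - c) \<bullet> (q - c))"
    unfolding dist_norm power2_norm_eq_inner
    by (simp add: inner_diff_left inner_diff_right inner_commute)
  moreover have "(dist p c)\<^sup>2 < 0.27\<^sup>2" "(dist q c)\<^sup>2 < 0.27\<^sup>2"
    using False by (auto intro!: power_strict_mono)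
  ultimately have "(p - c) \<bullet> (q - c) < 0"
    using assms(5) by (simp add: power2_eq_square)
  then show ?thesis using emeasure_ge_disc_and_opposite_points assms(1-4) far by blast
qed

section \<open>Convex universal covers\<close>

definition universal_cover :: "(real^2) set \<Rightarrow> bool" where
  "universal_cover K \<longleftrightarrow>
     (\<forall>g. rectifiable_path g \<and> pathfinish g = pathstart g \<and> curve_length g = 1
        \<longrightarrow> (\<exists>f. isometry f \<and> f ` path_image g \<subseteq> K))"

lemma universal_cover_contains_circle:
  assumes "universal_cover K"
  obtains c where "sphere c (1 / (2 * pi)) \<subseteq> K"
proof -
  define \<rho> :: real where "\<rho> = 1 / (2 * pi)"
  have "0 < \<rho>" and "curve_length (circle_path 0 \<rho>) = 1"
    by (simp_all add: \<rho>_def curve_length_circle_path)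
  then obtain f where f: "isometry f" "f ` path_image (circle_path 0 \<rho>) \<subseteq> K"
    using assms rectifiable_path_lipschitz[OF lipschitz_circle_path, of \<rho> 0] circle_path_closed
    unfolding universal_cover_def by auto
  then have "sphere (f 0) \<rho> \<subseteq> K"
    using isometry_sphere_subset_image sphere_subset_path_image_circle_path[OF \<open>0 < \<rho>\<close>] by blast
  then show ?thesis using that by (simp add: \<rho>_def)
qed

lemma universal_cover_contains_half_segment:
  assumes "universal_cover K"
  obtains p q where "p \<in> K" "q \<in> K" "dist p q = 1 / 2"
proof -
  define b :: "real^2" where "b = (1 / 2) *\<^sub>R axis 1 1"
  have "curve_length (back_and_forth 0 b) = 1"
    by (simp add: b_def curve_length_back_and_forth)
  then obtain h where h: "isometry h" "h ` path_image (back_and_forth 0 b) \<subseteq> K"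
    using assms rectifiable_path_lipschitz[OF lipschitz_back_and_forth] back_and_forth_closed
    unfolding universal_cover_def by blast
  have "0 \<in> path_image (back_and_forth 0 b)" "b \<in> path_image (back_and_forth 0 b)"
    unfolding path_image_def back_and_forth_def
    by (force intro: image_eqI[of _ _ 0] image_eqI[of _ _ "1 / 2"] simp: linepath_0' linepath_1')+
  moreover have "dist (h 0) (h b) = 1 / 2" using h(1) by (simp add: isometry_def b_def)
  ultimately show ?thesis using that h(2) by blast
qed

theorem mainTheorem2:
  fixes K :: "(real^2) set"
  assumes "convex K"
    and "\<And>g :: real \<Rightarrow> real^2.
           \<lbrakk>rectifiable_path g; pathfinish g = pathstart g; curve_length g = 1\<rbrakk>
           \<Longrightarrow> \<exists>f. isometry f \<and> f ` path_image g \<subseteq> K"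
  shows "emeasure lebesgue K \<ge> ennreal 0.0879873"
proof -
  have "universal_cover K" using assms(2) unfolding universal_cover_def by blast
  then obtain c p q where "sphere c (1 / (2 * pi)) \<subseteq> K" "p \<in> K" "q \<in> K" "dist p q = 1 / 2"
    by (meson universal_cover_contains_circle universal_cover_contains_half_segment)
  then show ?thesis using emeasure_ge_disc_and_half_segment[OF assms(1)] by blast
qed

end
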